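(* For every $\alpha\in(0,1)$ and every set of $m$ statistical queries $\mathcal{Q}$ over a universe $U$ of size $N$ with query matrix $Q\in[0,1]^{m\times N}$, there exists \[ s=\frac5\alpha\cdot\mathrm{hdisc}^*\left(Q,\frac{32\ln m}{\alpha^2}\right)=O\left(\frac{\log m}{\alpha}\cdot\mathrm{hdisc}^*\left(Q,\frac1{\alpha^2}\right)\right) \] such that for every dataset $x\in U^*$ whose rows are all distinct, there exists a dataset $y\in U^*$ of size at most $s$ such that $\|\mathcal{Q}(x)-\mathcal{Q}(y)\|_\infty\le\frac98\alpha$.
   Context: A statistical query is $q:U\to\mathbb{R}$ with $q(x)=\frac1{|x|}\sum_i q(x_i)$ for a dataset $x\in U^*$ (a finite sequence over $U$); $\mathcal{Q}(x)=(q_1(x),\ldots,q_m(x))$; the query matrix has $i$-th row $(q_i(u))_{u\in U}$. For an $m\times N$ matrix $Q$, $Q^*$ is the $(m+1)\times N$ matrix obtained by appending the all-ones row, $Q^*_S$ its submatrix of columns in $S$, and $\mathrm{hdisc}^*(Q,w)=\max_{S\subseteq[N],|S|\le w}\min_{z\in\{\pm1\}^S}\|Q^*_Sz\|_\infty$. *)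

theory Defs
  imports Complex_Main "HOL-Library.FuncSet"
begin

text \<open>The universe U is a finite type 'u (so N = CARD('u)); a family of m statistical
  queries is Q :: nat => 'u => real, the i-th query being Q i for i < m.
  Row i of the query matrix is (Q i u) for u in U.\<close>

definition query_answer :: "('u \<Rightarrow> real) \<Rightarrow> 'u list \<Rightarrow> real" where
  "query_answer q x = sum_list (map q x) / real (length x)"

definition qstar :: "(nat \<Rightarrow> 'u \<Rightarrow> real) \<Rightarrow> nat \<Rightarrow> nat \<Rightarrow> 'u \<Rightarrow> real" where
  "qstar Q m i u = (if i < m then Q i u else 1)"

definition disc_val :: "(nat \<Rightarrow> 'u \<Rightarrow> real) \<Rightarrow> nat \<Rightarrow> 'u set \<Rightarrow> ('u \<Rightarrow> real) \<Rightarrow> real" where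
  "disc_val Q m S z = Max ((\<lambda>i. \<bar>\<Sum>u\<in>S. qstar Q m i u * z u\<bar>) ` {..m})"

definition hdisc_star :: "(nat \<Rightarrow> 'u::finite \<Rightarrow> real) \<Rightarrow> nat \<Rightarrow> real \<Rightarrow> real" where
  "hdisc_star Q m w =
     Max ((\<lambda>S. Min ((\<lambda>z. disc_val Q m S z) ` (S \<rightarrow>\<^sub>E {-1, 1}))) ` {S. real (card S) \<le> w})"

end

(* A uniform sample of at most w = 32 ln m / \<alpha>^2 rows of x answers every query within \<alpha>/4, by
   Hoeffding's inequality and a union bound over the m queries.  The histogram of the sample is
   then shrunk by repeated halving: the elements of odd multiplicity are coloured by a colouring of
   Q^* of discrepancy at most H = hdisc^*(Q, w), every multiplicity is split accordingly, and the
   larger half is kept.  The all-ones row of Q^* keeps the two halves within H in size and the query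
   rows keep their sums within H, so halving from size L moves each answer by at most 2H/(L + H).
   As the sizes roughly halve, these errors add up to at most 5\<alpha>/6 once the size drops below
   5H/\<alpha>, and \<alpha>/4 + 5\<alpha>/6 \<le> 9\<alpha>/8. *)

theory Submission
  imports Defs "HOL-Probability.Probability"
begin

definition hist_size :: "('u::finite \<Rightarrow> nat) \<Rightarrow> nat" where
  "hist_size c = (\<Sum>u\<in>UNIV. c u)"

definition hist_sum :: "('u::finite \<Rightarrow> real) \<Rightarrow> ('u \<Rightarrow> nat) \<Rightarrow> real" where
  "hist_sum q c = (\<Sum>u\<in>UNIV. real (c u) * q u)"

definition hist_answer :: "('u::finite \<Rightarrow> real) \<Rightarrow> ('u \<Rightarrow> nat) \<Rightarrow> real" where
  "hist_answer q c = hist_sum q c / real (hist_size c)"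

definition hist_close ::
    "(nat \<Rightarrow> 'u::finite \<Rightarrow> real) \<Rightarrow> nat \<Rightarrow> real \<Rightarrow> ('u \<Rightarrow> nat) \<Rightarrow> ('u \<Rightarrow> nat) \<Rightarrow> bool"
  where
  "hist_close Q m e c c' \<longleftrightarrow> (\<forall>i<m. \<bar>hist_answer (Q i) c - hist_answer (Q i) c'\<bar> \<le> e)"

lemma hist_close_refl: "0 \<le> e \<Longrightarrow> hist_close Q m e c c"
  by (simp add: hist_close_def)

lemma hist_close_mono: "hist_close Q m e c c' \<Longrightarrow> e \<le> e' \<Longrightarrow> hist_close Q m e' c c'"
  by (auto simp: hist_close_def)

lemma hist_close_trans:
  "hist_close Q m e c c' \<Longrightarrow> hist_close Q m e' c' c'' \<Longrightarrow> hist_close Q m (e + e') c c''"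
  unfolding hist_close_def
  by (smt (verit) abs_triangle_ineq)

lemma hist_size_count_list: "hist_size (count_list y) = length y"
  unfolding hist_size_def by (rule sum_count_set) auto

lemma hist_sum_count_list: "hist_sum q (count_list y) = sum_list (map q y)"
proof (induction y)
  case Nil
  then show ?case by (simp add: hist_sum_def)
next
  case (Cons a y)
  have "hist_sum q (count_list (a # y)) = (\<Sum>u\<in>UNIV. real (count_list y u) * q u + (if a = u then q u else 0))"
    unfolding hist_sum_def by (intro sum.cong) (auto simp: algebra_simps)
  also have "\<dots> = hist_sum q (count_list y) + q a"
    by (simp add: hist_sum_def sum.distrib)
  finally show ?case using Cons.IH by (simp add: add.commute del: count_list.simps)
qed

lemma query_answer_eq_hist_answer: "query_answer q y = hist_answer q (count_list y)"
  by (simp add: query_answer_def hist_answer_def hist_size_count_list hist_sum_count_list)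

lemma hist_close_count_list_iff:
  "hist_close Q m e (count_list x) (count_list y) \<longleftrightarrow>
    (\<forall>i<m. \<bar>query_answer (Q i) x - query_answer (Q i) y\<bar> \<le> e)"
  by (simp add: hist_close_def query_answer_eq_hist_answer)

lemma count_list_replicate: "count_list (replicate n u) v = (if u = v then n else 0)"
  by (induction n) auto

lemma count_list_concat_replicate:
  "distinct xs \<Longrightarrow>
    count_list (concat (map (\<lambda>u. replicate (c u) u) xs)) v = (if v \<in> set xs then c v else 0)"
  by (induction xs) (auto simp: count_list_replicate)

lemma ex_list_count_list_eq: "\<exists>y::'u::finite list. count_list y = c"
proof -
  obtain xs :: "'u list" where "set xs = UNIV" "distinct xs"
    using finite_distinct_list[of "UNIV :: 'u set"] by auto
  then have "count_list (concat (map (\<lambda>u. replicate (c u) u) xs)) = c"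
    by (simp add: count_list_concat_replicate fun_eq_iff)
  then show ?thesis ..
qed

lemma hist_sum_nonneg: "(\<And>u. 0 \<le> q u) \<Longrightarrow> 0 \<le> hist_sum q c"
  unfolding hist_sum_def by (intro sum_nonneg) auto

lemma hist_sum_le_hist_size: "(\<And>u. q u \<le> 1) \<Longrightarrow> hist_sum q c \<le> real (hist_size c)"
  unfolding hist_sum_def hist_size_def of_nat_sum by (intro sum_mono) (simp add: mult_left_le)

lemma hist_size_eq_hist_sum_one: "real (hist_size c) = hist_sum (\<lambda>_. 1) c"
  by (simp add: hist_size_def hist_sum_def)

lemma hist_sum_add: "hist_sum q (\<lambda>u. a u + b u) = hist_sum q a + hist_sum q b"
  by (simp add: hist_sum_def sum.distrib algebra_simps)

lemma hist_size_add: "hist_size (\<lambda>u. a u + b u) = hist_size a + hist_size b"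
  by (simp add: hist_size_def sum.distrib)

lemma halving_mean_error:
  fixes p q a b H :: real
  assumes "0 < p" and "q \<le> p" and "p - q \<le> H" and "\<bar>a - b\<bar> \<le> H"
    and "0 \<le> a + b" and "a + b \<le> p + q" and "H \<le> p + q"
  shows "\<bar>(a + b) / (p + q) - a / p\<bar> \<le> 2 * H / (p + q + H)"
proof -
  define n d \<sigma> where "n = p + q" and "d = p - q" and "\<sigma> = (a + b) / (p + q)"
  have "n > 0" "0 \<le> d" "d \<le> H" "H \<le> n"
    using assms by (auto simp: n_def d_def)
  have "0 \<le> \<sigma>" "\<sigma> \<le> 1"
    using assms \<open>n > 0\<close> by (auto simp: \<sigma>_def n_def divide_simps)
  have "a / p - \<sigma> = ((a - b) - d * \<sigma>) / (n + d)"
    using \<open>n > 0\<close> assms(1)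
    by (simp add: \<sigma>_def n_def d_def divide_simps) (simp add: algebra_simps)
  moreover have "\<bar>(a - b) - d * \<sigma>\<bar> \<le> H + d"
  proof -
    have "0 \<le> d * \<sigma>" "d * \<sigma> \<le> d"
      using \<open>0 \<le> d\<close> \<open>0 \<le> \<sigma>\<close> \<open>\<sigma> \<le> 1\<close> by (auto simp: mult_left_le)
    then show ?thesis
      using assms(4) unfolding abs_le_iff by linarith
  qed
  ultimately have "\<bar>a / p - \<sigma>\<bar> \<le> (H + d) / (n + d)"
    using \<open>n > 0\<close> \<open>0 \<le> d\<close> by (simp add: divide_right_mono)
  also have "\<dots> \<le> 2 * H / (n + H)"
  proof -
    have "d * (n - H) \<le> H * (n - H)"
      using \<open>d \<le> H\<close> \<open>H \<le> n\<close> by (intro mult_right_mono) auto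
    then show ?thesis
      using \<open>n > 0\<close> \<open>0 \<le> d\<close> \<open>d \<le> H\<close> by (simp add: field_simps)
  qed
  finally show ?thesis
    by (simp add: \<sigma>_def n_def abs_minus_commute)
qed

lemma qstar_query_row: "i < m \<Longrightarrow> qstar Q m i = Q i"
  by (simp add: fun_eq_iff qstar_def)

lemma qstar_ones_row: "qstar Q m m = (\<lambda>_. 1)"
  by (simp add: fun_eq_iff qstar_def)

lemma finite_sign_vectors: "finite (S \<rightarrow>\<^sub>E {-1, 1::real})" for S :: "'u::finite set"
  by (intro finite_PiE) auto

lemma sign_vectors_nonempty: "S \<rightarrow>\<^sub>E {-1, 1::real} \<noteq> {}"
  by (simp add: PiE_eq_empty_iff)

lemma disc_val_le_hdisc_star:
  fixes Q :: "nat \<Rightarrow> 'u::finite \<Rightarrow> real"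
  assumes "real (card S) \<le> w"
  shows "\<exists>z \<in> S \<rightarrow>\<^sub>E {-1, 1}. disc_val Q m S z \<le> hdisc_star Q m w"
proof -
  let ?D = "(\<lambda>z. disc_val Q m S z) ` (S \<rightarrow>\<^sub>E {-1, 1})"
  have "Min ?D \<in> ?D"
    using finite_sign_vectors sign_vectors_nonempty by (intro Min_in) auto
  moreover have "Min ?D \<le> hdisc_star Q m w"
    unfolding hdisc_star_def using assms by (intro Max_ge) auto
  ultimately show ?thesis by auto
qed

lemma abs_row_sum_le_disc_val:
  "i \<le> m \<Longrightarrow> \<bar>\<Sum>u\<in>S. qstar Q m i u * z u\<bar> \<le> disc_val Q m S z"
  unfolding disc_val_def by (intro Max_ge) auto

lemma hdisc_star_colouring:
  fixes Q :: "nat \<Rightarrow> 'u::finite \<Rightarrow> real"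
  assumes "real (card S) \<le> w"
  shows "\<exists>z \<in> S \<rightarrow>\<^sub>E {-1, 1}.
    \<forall>i\<le>m. \<bar>\<Sum>u\<in>S. qstar Q m i u * z u\<bar> \<le> hdisc_star Q m w"
proof -
  obtain z where "z \<in> S \<rightarrow>\<^sub>E {-1, 1}" "disc_val Q m S z \<le> hdisc_star Q m w"
    using disc_val_le_hdisc_star[OF assms] by blast
  then show ?thesis
    by (blast intro: abs_row_sum_le_disc_val order_trans)
qed

lemma hdisc_star_nonneg:
  fixes Q :: "nat \<Rightarrow> 'u::finite \<Rightarrow> real"
  assumes "0 \<le> w"
  shows "0 \<le> hdisc_star Q m w"
proof -
  obtain z where "disc_val Q m {} z \<le> hdisc_star Q m w"
    using disc_val_le_hdisc_star[where S = "{}" and Q = Q and m = m] assms by auto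
  then show ?thesis
    using abs_row_sum_le_disc_val[where i = 0 and m = m and S = "{}" and Q = Q and z = z] by simp
qed

lemma balanced_hist_split:
  fixes Q :: "nat \<Rightarrow> 'u::finite \<Rightarrow> real"
  assumes "real (hist_size c) \<le> w"
  shows "\<exists>c1 c2. c = (\<lambda>u. c1 u + c2 u) \<and>
    (\<forall>i\<le>m. \<bar>hist_sum (qstar Q m i) c1 - hist_sum (qstar Q m i) c2\<bar> \<le> hdisc_star Q m w)"
proof -
  define S where "S = {u. odd (c u)}"
  have "card S \<le> (\<Sum>u\<in>S. c u)"
    unfolding card_eq_sum by (intro sum_mono) (auto simp: S_def odd_pos Suc_leI)
  also have "\<dots> \<le> hist_size c"
    unfolding hist_size_def by (intro sum_mono2) auto
  finally have "real (card S) \<le> w"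
    using assms by linarith
  then obtain z where z: "z \<in> S \<rightarrow>\<^sub>E {-1, 1}"
    and disc: "\<forall>i\<le>m. \<bar>\<Sum>u\<in>S. qstar Q m i u * z u\<bar> \<le> hdisc_star Q m w"
    using hdisc_star_colouring by blast
  define c1 where "c1 u = c u div 2 + (if u \<in> S \<and> z u = 1 then 1 else 0)" for u
  define c2 where "c2 u = c u div 2 + (if u \<in> S \<and> z u = -1 then 1 else 0)" for u
  have z_sign: "z u = 1 \<or> z u = -1" if "u \<in> S" for u
    using z that by (auto simp: PiE_def)
  have "c u = c1 u + c2 u" for u
  proof (cases "odd (c u)")
    case True
    then show ?thesis
      using z_sign[of u] by (auto simp: c1_def c2_def S_def elim!: oddE)
  next
    case False
    then show ?thesis
      by (auto simp: c1_def c2_def S_def elim!: evenE)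
  qed
  moreover have "hist_sum r c1 - hist_sum r c2 = (\<Sum>u\<in>S. r u * z u)" for r
  proof -
    have "hist_sum r c1 - hist_sum r c2 = (\<Sum>u\<in>UNIV. (real (c1 u) - real (c2 u)) * r u)"
      by (simp add: hist_sum_def sum_subtractf left_diff_distrib)
    also have "\<dots> = (\<Sum>u\<in>UNIV. if u \<in> S then r u * z u else 0)"
      using z_sign by (intro sum.cong) (auto simp: c1_def c2_def)
    finally show ?thesis
      by (simp add: sum.If_cases)
  qed
  ultimately show ?thesis
    using disc by (intro exI[of _ c1] exI[of _ c2]) (auto simp: fun_eq_iff)
qed

lemma hist_halving_step:
  fixes Q :: "nat \<Rightarrow> 'u::finite \<Rightarrow> real"
  assumes Q_range: "\<forall>i<m. \<forall>u. 0 \<le> Q i u \<and> Q i u \<le> 1"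
    and "0 < hist_size c" and "real (hist_size c) \<le> w" and "hdisc_star Q m w \<le> real (hist_size c)"
  defines "H \<equiv> hdisc_star Q m w"
  shows "\<exists>c'. real (hist_size c) \<le> 2 * real (hist_size c') \<and>
    2 * real (hist_size c') \<le> real (hist_size c) + H \<and>
    hist_close Q m (2 * H / (real (hist_size c) + H)) c c'"
proof -
  obtain c1 c2 where c: "c = (\<lambda>u. c1 u + c2 u)" and "hist_size c2 \<le> hist_size c1"
    and disc: "\<forall>i\<le>m. \<bar>hist_sum (qstar Q m i) c1 - hist_sum (qstar Q m i) c2\<bar> \<le> H"
  proof -
    obtain c1 c2 where "c = (\<lambda>u. c1 u + c2 u)"
      and "\<forall>i\<le>m. \<bar>hist_sum (qstar Q m i) c1 - hist_sum (qstar Q m i) c2\<bar> \<le> H"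
      using balanced_hist_split[OF assms(3)] unfolding H_def by blast
    then show thesis
      using that[of c1 c2] that[of c2 c1] nat_le_linear[of "hist_size c1" "hist_size c2"]
      by (auto simp: add.commute abs_minus_commute)
  qed
  have size_c: "hist_size c = hist_size c1 + hist_size c2"
    by (simp add: c hist_size_add)
  have size_diff: "real (hist_size c1) - real (hist_size c2) \<le> H"
    using disc[rule_format, of m] by (simp add: hist_size_eq_hist_sum_one qstar_ones_row)
  have "\<bar>hist_answer (Q i) c - hist_answer (Q i) c1\<bar> \<le> 2 * H / (real (hist_size c) + H)"
    if "i < m" for i
    unfolding hist_answer_def c hist_size_add of_nat_add hist_sum_add
  proof (rule halving_mean_error)
    show "\<bar>hist_sum (Q i) c1 - hist_sum (Q i) c2\<bar> \<le> H"
      using disc[rule_format, of i] \<open>i < m\<close> by (simp add: qstar_query_row)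
    show "0 \<le> hist_sum (Q i) c1 + hist_sum (Q i) c2"
      "hist_sum (Q i) c1 + hist_sum (Q i) c2 \<le> real (hist_size c1) + real (hist_size c2)"
      using hist_sum_nonneg[of "Q i" c] hist_sum_le_hist_size[of "Q i" c] Q_range \<open>i < m\<close>
      by (auto simp: c hist_sum_add hist_size_add)
  qed (use assms(2,4) size_c size_diff \<open>hist_size c2 \<le> hist_size c1\<close> in \<open>auto simp: H_def\<close>)
  then show ?thesis
    using size_c size_diff \<open>hist_size c2 \<le> hist_size c1\<close>
    by (intro exI[of _ c1]) (auto simp: hist_close_def)
qed

lemma last_halving_error_le:
  fixes H L \<alpha> :: real
  assumes "0 \<le> H" and "0 < \<alpha>" and "\<alpha> \<le> 1" and "5 * H < \<alpha> * L"
  shows "2 * H / (L + H) + 2 * H / (L - H) \<le> 5 * \<alpha> / 6"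
proof -
  have "0 < L"
    using assms by (smt (verit) zero_less_mult_pos)
  then have "5 * H < L"
    using assms mult_left_le_one_le[of L \<alpha>] by linarith
  have "24 * H * L \<le> 5 * \<alpha> * ((L + H) * (L - H))"
  proof -
    have "(5 * H) * L \<le> (\<alpha> * L) * L"
      using assms \<open>0 < L\<close> by (intro mult_right_mono) auto
    moreover have "\<alpha> * (H * H) \<le> H * H"
      using assms by (simp add: mult_left_le_one_le)
    moreover have "H * (5 * H) \<le> H * L"
      using assms \<open>5 * H < L\<close> by (intro mult_left_mono) auto
    ultimately show ?thesis
      by (simp add: algebra_simps)
  qed
  moreover have "0 < (L + H) * (L - H)"
    using \<open>0 \<le> H\<close> \<open>5 * H < L\<close> by simp
  moreover have "2 * H / (L + H) + 2 * H / (L - H) = 4 * H * L / ((L + H) * (L - H))"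
    using \<open>0 \<le> H\<close> \<open>5 * H < L\<close> by (simp add: field_simps)
  ultimately show ?thesis
    by (simp add: pos_divide_le_eq)
qed

lemma halving_error_telescope:
  fixes H L L' :: real
  assumes "0 \<le> H" and "H < L" and "H < L'" and "2 * (L' - H) \<le> L - H"
  shows "2 * H / (L + H) + 2 * H / (L - H) \<le> 2 * H / (L' - H)"
proof -
  have "2 * H / (L + H) + 2 * H / (L - H) \<le> 2 * H / (L - H) + 2 * H / (L - H)"
    using assms by (intro add_right_mono divide_left_mono) auto
  also have "\<dots> = 2 * H / ((L - H) / 2)"
    by simp
  also have "\<dots> \<le> 2 * H / (L' - H)"
    using assms by (intro divide_left_mono) auto
  finally show ?thesis .
qed

text \<open>At a size L above 5H/\<alpha> the reserve 2H/(L - H) is held back from the budget 5\<alpha>/6: it pays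
  for the next halving step and is replenished by the reserve at the next, about half as large, size.\<close>

lemma hist_compression_invariant:
  fixes Q :: "nat \<Rightarrow> 'u::finite \<Rightarrow> real"
  assumes Q_range: "\<forall>i<m. \<forall>u. 0 \<le> Q i u \<and> Q i u \<le> 1"
    and "0 < \<alpha>" and "\<alpha> \<le> 1" and "0 \<le> hdisc_star Q m w"
  shows "0 < hist_size c \<Longrightarrow> real (hist_size c) \<le> w \<Longrightarrow>
    \<exists>c'. 0 < hist_size c' \<and> real (hist_size c') \<le> 5 / \<alpha> * hdisc_star Q m w \<and>
      hist_close Q m (if real (hist_size c) \<le> 5 / \<alpha> * hdisc_star Q m w then 0
        else 5 * \<alpha> / 6 - 2 * hdisc_star Q m w / (real (hist_size c) - hdisc_star Q m w)) c c'"
proof (induction "hist_size c" arbitrary: c rule: less_induct)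
  case less
  define H s where "H = hdisc_star Q m w" and "s = 5 / \<alpha> * H"
  define L where "L = real (hist_size c)"
  show ?case
  proof (cases "L \<le> s")
    case True
    then show ?thesis
      using less.prems by (intro exI[of _ c]) (auto simp: hist_close_refl L_def s_def H_def)
  next
    case False
    have "0 \<le> H"
      using assms(4) by (simp add: H_def)
    have "5 * H < \<alpha> * L"
      using False \<open>0 < \<alpha>\<close> by (simp add: s_def field_simps)
    then have "H < L"
      using \<open>0 \<le> H\<close> \<open>\<alpha> \<le> 1\<close> \<open>0 < \<alpha>\<close> mult_left_le_one_le[of L \<alpha>]
      by (smt (verit) zero_less_mult_pos)
    obtain c' where size_c': "L \<le> 2 * real (hist_size c')" "2 * real (hist_size c') \<le> L + H"
      and close_c': "hist_close Q m (2 * H / (L + H)) c c'"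
      using hist_halving_step[OF Q_range less.prems] \<open>H < L\<close> by (force simp: L_def H_def)
    define L' where "L' = real (hist_size c')"
    have "hist_size c' < hist_size c" "0 < hist_size c'" "real (hist_size c') \<le> w"
      using size_c' \<open>H < L\<close> less.prems by (auto simp: L_def)
    then obtain c'' where "0 < hist_size c''" "real (hist_size c'') \<le> s"
      and close_c'': "hist_close Q m (if L' \<le> s then 0 else 5 * \<alpha> / 6 - 2 * H / (L' - H)) c' c''"
      using less.hyps unfolding L'_def s_def H_def by blast
    have "2 * H / (L + H) + (if L' \<le> s then 0 else 5 * \<alpha> / 6 - 2 * H / (L' - H))
      \<le> 5 * \<alpha> / 6 - 2 * H / (L - H)"
    proof (cases "L' \<le> s")
      case True
      then show ?thesis
        using last_halving_error_le[OF \<open>0 \<le> H\<close> \<open>0 < \<alpha>\<close> \<open>\<alpha> \<le> 1\<close> \<open>5 * H < \<alpha> * L\<close>]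
        by simp
    next
      case False
      have "5 * H \<le> s"
        using \<open>0 < \<alpha>\<close> \<open>\<alpha> \<le> 1\<close> \<open>0 \<le> H\<close>
        by (simp add: s_def field_simps mult_right_le_one_le)
      then have "2 * H / (L + H) + 2 * H / (L - H) \<le> 2 * H / (L' - H)"
        using False size_c' \<open>0 \<le> H\<close> \<open>H < L\<close>
        by (intro halving_error_telescope) (auto simp: L'_def)
      then show ?thesis
        using False by simp
    qed
    then have "hist_close Q m (5 * \<alpha> / 6 - 2 * H / (L - H)) c c''"
      using hist_close_trans[OF close_c' close_c''] hist_close_mono by blast
    then show ?thesis
      using False \<open>0 < hist_size c''\<close> \<open>real (hist_size c'') \<le> s\<close>
      by (intro exI[of _ c'']) (simp add: L_def s_def H_def)
  qed
qed

lemma hist_compression: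
  fixes Q :: "nat \<Rightarrow> 'u::finite \<Rightarrow> real"
  assumes "\<forall>i<m. \<forall>u. 0 \<le> Q i u \<and> Q i u \<le> 1"
    and "0 < \<alpha>" and "\<alpha> \<le> 1" and "0 \<le> hdisc_star Q m w"
    and "0 < hist_size c" and "real (hist_size c) \<le> w"
  shows "\<exists>c'. 0 < hist_size c' \<and> real (hist_size c') \<le> 5 / \<alpha> * hdisc_star Q m w \<and>
    hist_close Q m (5 * \<alpha> / 6) c c'"
proof -
  define H where "H = hdisc_star Q m w"
  obtain c' where "0 < hist_size c'" "real (hist_size c') \<le> 5 / \<alpha> * H"
    and close: "hist_close Q m (if real (hist_size c) \<le> 5 / \<alpha> * H then 0
      else 5 * \<alpha> / 6 - 2 * H / (real (hist_size c) - H)) c c'"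
    using hist_compression_invariant[OF assms(1-4)] assms(5,6) unfolding H_def by blast
  moreover have "\<alpha> * H \<le> 5 * H"
    using assms(2-4) mult_left_le_one_le[of H \<alpha>] by (simp add: H_def)
  then have "H \<le> 5 / \<alpha> * H"
    using assms(2) by (simp add: field_simps)
  then have "(if real (hist_size c) \<le> 5 / \<alpha> * H then 0
      else 5 * \<alpha> / 6 - 2 * H / (real (hist_size c) - H)) \<le> 5 * \<alpha> / 6"
    using assms(2,4) by (auto simp: H_def)
  ultimately show ?thesis
    using hist_close_mono unfolding H_def by blast
qed

lemma hoeffding_uniform_sample:
  fixes q :: "'u \<Rightarrow> real" and A :: "'u set" and k :: nat
  assumes q_range: "\<forall>u. 0 \<le> q u \<and> q u \<le> 1" and "finite A" and "A \<noteq> {}"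
    and "0 < k" and "0 \<le> \<epsilon>"
  shows "measure_pmf.prob (Pi_pmf {..<k} d (\<lambda>_. pmf_of_set A))
           {f. \<epsilon> \<le> \<bar>(\<Sum>j<k. q (f j)) / real k - (\<Sum>u\<in>A. q u) / real (card A)\<bar>}
         \<le> 2 * exp (-2 * real k * \<epsilon>\<^sup>2)"
proof -
  define P where "P = Pi_pmf {..<k} d (\<lambda>_. pmf_of_set A)"
  have component: "map_pmf (\<lambda>f. f j) P = pmf_of_set A" if "j < k" for j
    unfolding P_def using that by (subst Pi_pmf_component) auto
  have distr_component: "distr (measure_pmf P) borel (\<lambda>f. q (f j)) = distr (measure_pmf (pmf_of_set A)) borel q"
    if "j < k" for j
  proof -
    have "distr (measure_pmf P) borel (\<lambda>f. q (f j)) = distr (measure_pmf (map_pmf (\<lambda>f. f j) P)) borel q"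
      unfolding map_pmf_rep_eq by (subst distr_distr) (auto simp: o_def)
    then show ?thesis
      using component[OF that] by simp
  qed
  have mean: "(\<Sum>u\<in>A. q u) / real (card A) \<equiv> measure_pmf.expectation P (\<lambda>f. q (f 0))"
  proof -
    have "measure_pmf.expectation P (\<lambda>f. q (f 0)) = measure_pmf.expectation (map_pmf (\<lambda>f. f 0) P) q"
      by simp
    also have "\<dots> = (\<Sum>u\<in>A. q u) / real (card A)"
      using component[of 0] \<open>0 < k\<close> \<open>finite A\<close> \<open>A \<noteq> {}\<close> by (simp add: integral_pmf_of_set)
    finally show "(\<Sum>u\<in>A. q u) / real (card A) \<equiv> measure_pmf.expectation P (\<lambda>f. q (f 0))"
      by simp
  qed
  interpret Hoeffding_ineq_iid "measure_pmf P" "{..<k}" "\<lambda>j f. q (f j)" "\<lambda>f. q (f 0)" 0 1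
    "(\<Sum>u\<in>A. q u) / real (card A)"
  proof unfold_locales
    show "prob_space.indep_vars (measure_pmf P) (\<lambda>_. borel) (\<lambda>j f. q (f j)) {..<k}"
      unfolding P_def
      by (intro prob_space.indep_vars_compose2[OF _ indep_vars_Pi_pmf])
         (auto simp: measure_pmf.prob_space_axioms)
    show "distr (measure_pmf P) borel (\<lambda>f. q (f j)) = distr (measure_pmf P) borel (\<lambda>f. q (f 0))"
      if "j \<in> {..<k}" for j
      using distr_component[of j] distr_component[of 0] that \<open>0 < k\<close> by simp
  qed (use q_range mean in auto)
  have "{..<k} \<noteq> {}"
    using \<open>0 < k\<close> by auto
  from Hoeffding_ineq_abs_ge'[OF \<open>0 \<le> \<epsilon>\<close> _ this] show ?thesis
    by (simp add: P_def)
qed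

lemma ex_sample_close:
  fixes Q :: "nat \<Rightarrow> 'u \<Rightarrow> real" and x :: "'u list" and k :: nat
  assumes Q_range: "\<forall>i<m. \<forall>u. 0 \<le> Q i u \<and> Q i u \<le> 1" and "distinct x" and "x \<noteq> []"
    and "0 < k" and "0 \<le> \<epsilon>" and union_bound: "2 * real m * exp (-2 * real k * \<epsilon>\<^sup>2) < 1"
  shows "\<exists>y. length y = k \<and> (\<forall>i<m. \<bar>query_answer (Q i) x - query_answer (Q i) y\<bar> < \<epsilon>)"
proof -
  define P where "P = Pi_pmf {..<k} (hd x) (\<lambda>_. pmf_of_set (set x))"
  define bad where
    "bad i = {f. \<epsilon> \<le> \<bar>(\<Sum>j<k. Q i (f j)) / real k - (\<Sum>u\<in>set x. Q i u) / real (card (set x))\<bar>}"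
    for i
  have "measure_pmf.prob P (\<Union>i<m. bad i) \<le> (\<Sum>i<m. measure_pmf.prob P (bad i))"
    by (rule measure_pmf.finite_measure_subadditive_finite) auto
  also have "\<dots> \<le> (\<Sum>i<m. 2 * exp (-2 * real k * \<epsilon>\<^sup>2))"
    unfolding P_def bad_def using Q_range assms(3-5)
    by (intro sum_mono hoeffding_uniform_sample) auto
  also have "\<dots> < 1"
    using union_bound by simp
  finally have "(\<Union>i<m. bad i) \<noteq> UNIV"
    by auto
  then obtain f where f: "\<forall>i<m. f \<notin> bad i"
    by blast
  define y where "y = map f [0..<k]"
  have "query_answer (Q i) x = (\<Sum>u\<in>set x. Q i u) / real (card (set x))" for i
    using \<open>distinct x\<close> by (simp add: query_answer_def sum_list_distinct_conv_sum_set distinct_card)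
  moreover have "query_answer (Q i) y = (\<Sum>j<k. Q i (f j)) / real k" for i
    by (simp add: query_answer_def y_def interv_sum_list_conv_sum_set_nat atLeast0LessThan o_def)
  ultimately show ?thesis
    using f unfolding bad_def by (intro exI[of _ y]) (auto simp: y_def abs_minus_commute)
qed

lemma sampling_failure_lt_one:
  fixes \<alpha> :: real and m k :: nat
  assumes "2 \<le> m" and "\<alpha>\<^sup>2 \<le> 1" and "32 * ln (real m) \<le> (real k + 1) * \<alpha>\<^sup>2"
  shows "2 * real m * exp (-2 * real k * (\<alpha> / 4)\<^sup>2) < 1"
proof -
  have "exp (-2 * real k * (\<alpha> / 4)\<^sup>2) \<le> exp (1 / 8 - 4 * ln (real m))"
    using assms(2,3) by (simp add: power_divide algebra_simps)
  also have "\<dots> = exp (1 / 8) / real m ^ 4"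
    using assms(1) by (simp add: exp_diff exp_of_nat_mult[of 4, simplified])
  finally have "2 * real m * exp (-2 * real k * (\<alpha> / 4)\<^sup>2) \<le> 2 * exp (1 / 8) / real m ^ 3"
    using assms(1) by (simp add: field_simps power_eq_if)
  also have "\<dots> < 1"
  proof -
    have "exp (1 / 8 :: real) \<le> exp 1"
      by simp
    then have "exp (1 / 8 :: real) \<le> 3"
      using exp_le by linarith
    moreover have "(2::real) ^ 3 \<le> real m ^ 3"
      using assms(1) by (intro power_mono) auto
    ultimately show ?thesis
      by (simp add: divide_less_eq)
  qed
  finally show ?thesis .
qed

lemma ex_short_sample_close:
  fixes Q :: "nat \<Rightarrow> 'u \<Rightarrow> real" and \<alpha> :: real
  assumes Q_range: "\<forall>i<m. \<forall>u. 0 \<le> Q i u \<and> Q i u \<le> 1" and "distinct x" and "x \<noteq> []"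
    and "0 < \<alpha>" and "\<alpha> \<le> 1" and "2 \<le> m"
  shows "\<exists>y. y \<noteq> [] \<and> real (length y) \<le> 32 * ln (real m) / \<alpha>\<^sup>2 \<and>
    (\<forall>i<m. \<bar>query_answer (Q i) x - query_answer (Q i) y\<bar> \<le> \<alpha> / 4)"
proof -
  define w where "w = 32 * ln (real m) / \<alpha>\<^sup>2"
  have "\<alpha>\<^sup>2 \<le> 1" "0 < \<alpha>\<^sup>2"
    using assms(4,5) by (auto simp: power_le_one)
  have w_alpha: "w * \<alpha>\<^sup>2 = 32 * ln (real m)"
    using \<open>0 < \<alpha>\<^sup>2\<close> by (simp add: w_def)
  have "1 / 2 \<le> ln (2 :: real)"
    using ln_add1_ge[of "1 :: real"] by simp
  moreover have "ln 2 \<le> ln (real m)"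
    using assms(6) by simp
  ultimately have "1 * \<alpha>\<^sup>2 \<le> w * \<alpha>\<^sup>2"
    using \<open>\<alpha>\<^sup>2 \<le> 1\<close> w_alpha by linarith
  then have "1 \<le> w"
    using \<open>0 < \<alpha>\<^sup>2\<close> by (simp add: mult_le_cancel_right)
  show ?thesis
  proof (cases "real (length x) \<le> w")
    case True
    then show ?thesis
      using assms(3,4) by (intro exI[of _ x]) (simp add: w_def)
  next
    case False
    define k where "k = nat \<lfloor>w\<rfloor>"
    have "real k \<le> w" "w < real k + 1" "0 < k"
      using \<open>1 \<le> w\<close> by (auto simp: k_def)
    moreover have "32 * ln (real m) \<le> (real k + 1) * \<alpha>\<^sup>2"
      using \<open>w < real k + 1\<close> \<open>0 < \<alpha>\<^sup>2\<close> w_alpha by (simp flip: w_alpha)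
    then have "2 * real m * exp (-2 * real k * (\<alpha> / 4)\<^sup>2) < 1"
      using sampling_failure_lt_one assms(6) \<open>\<alpha>\<^sup>2 \<le> 1\<close> by blast
    then obtain y where "length y = k"
      and "\<forall>i<m. \<bar>query_answer (Q i) x - query_answer (Q i) y\<bar> < \<alpha> / 4"
      using ex_sample_close[where \<epsilon> = "\<alpha> / 4", OF Q_range assms(2,3) \<open>0 < k\<close>] assms(4) by auto
    ultimately show ?thesis
      by (intro exI[of _ y]) (auto simp: w_def less_imp_le)
  qed
qed

theorem corollary6p9:
  fixes \<alpha> :: real and m :: nat and Q :: "nat \<Rightarrow> 'u::finite \<Rightarrow> real"
  assumes "0 < \<alpha>" and "\<alpha> < 1"
    and "m \<ge> 2"
    and "\<forall>i<m. \<forall>u. 0 \<le> Q i u \<and> Q i u \<le> 1"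
  shows "\<forall>x::'u list. distinct x \<and> x \<noteq> [] \<longrightarrow>
           (\<exists>y::'u list. y \<noteq> [] \<and>
              real (length y) \<le> 5 / \<alpha> * hdisc_star Q m (32 * ln (real m) / \<alpha>^2) \<and>
              (\<forall>i<m. \<bar>query_answer (Q i) x - query_answer (Q i) y\<bar> \<le> 9/8 * \<alpha>))"
proof (intro allI impI, elim conjE)
  fix x :: "'u list"
  assume "distinct x" "x \<noteq> []"
  define w where "w = 32 * ln (real m) / \<alpha>^2"
  obtain y0 where "y0 \<noteq> []" "real (length y0) \<le> w"
    and sample: "hist_close Q m (\<alpha> / 4) (count_list x) (count_list y0)"
    using ex_short_sample_close[OF assms(4) \<open>distinct x\<close> \<open>x \<noteq> []\<close> assms(1)] assms(2,3)
    unfolding w_def hist_close_count_list_iff by auto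
  moreover have "0 \<le> hdisc_star Q m w"
    using assms(3) by (intro hdisc_star_nonneg) (simp add: w_def)
  ultimately obtain c where "0 < hist_size c" "real (hist_size c) \<le> 5 / \<alpha> * hdisc_star Q m w"
    and compress: "hist_close Q m (5 * \<alpha> / 6) (count_list y0) c"
    using hist_compression[OF assms(4,1)] assms(2) by (force simp: hist_size_count_list)
  obtain y where y: "count_list y = c"
    using ex_list_count_list_eq by blast
  have "hist_close Q m (9/8 * \<alpha>) (count_list x) (count_list y)"
    using hist_close_mono[OF hist_close_trans[OF sample compress]] assms(1) unfolding y by simp
  then show "\<exists>y. y \<noteq> [] \<and> real (length y) \<le> 5 / \<alpha> * hdisc_star Q m w \<and>
    (\<forall>i<m. \<bar>query_answer (Q i) x - query_answer (Q i) y\<bar> \<le> 9/8 * \<alpha>)"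
    using \<open>0 < hist_size c\<close> \<open>real (hist_size c) \<le> 5 / \<alpha> * hdisc_star Q m w\<close>
    by (intro exI[of _ y]) (auto simp flip: y simp: hist_size_count_list hist_close_count_list_iff)
qed

end
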